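(* Let $V$ be a commutative unital quantale whose underlying lattice is a frame and in which $k=\top$. Let $(X,a)$ and $(Y,b)$ be $V$-groups, $\varphi\colon Y\to\mathrm{Aut}(X)$ a group action, and $X\rtimes Y$ the semidirect product group defined by $\varphi$. The following are equivalent: (i) $(X,a)\xrightarrow{\langle 1,0\rangle}(X\rtimes Y,a\otimes b)\underset{\langle 0,1\rangle}{\overset{\pi_2}{\rightleftarrows}}(Y,b)$ is a split extension in $\mathsf{VGrp}$, where $(a\otimes b)((x,y),(x',y'))=a(x,x')\otimes b(y,y')$; (ii) the map $\overline{\varphi}\colon(X\times Y,a\otimes b)\to(X\times Y,a\otimes b)$, $(x,y)\mapsto(\varphi_y(x),y)$, is a $V$-functor.
   Context: A commutative unital quantale $V$ is a complete lattice with a commutative associative operation $\otimes$ with unit $k$ preserving arbitrary joins in each variable. A $V$-category $(X,a)$: $a\colon X\times X\to V$ with $k\le a(x,x)$ and $a(x,x')\otimes a(x',x'')\le a(x,x'')$; a $V$-functor is a map $f$ with $a(x,x')\le b(f(x),f(x'))$. A $V$-group $(X,a,+)$ is a $V$-category with a group structure (additive, not necessarily abelian) such that $a(x_1,x_2)\otimes a(x_1',x_2')\le a(x_1+x_1',x_2+x_2')$; $V$-homomorphisms are group homomorphisms that are $V$-functors; category $\mathsf{VGrp}$ (pointed since $k=\top$). The semidirect product $X\rtimes Y$ is $X\times Y$ with $(x,y)+(x',y')=(x+\varphi_y(x'),y+y')$, $\varphi_y=\varphi(y)$; $\langle 1,0\rangle(x)=(x,0)$, $\langle 0,1\rangle(y)=(0,y)$,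 $\pi_2(x,y)=y$. A split extension in $\mathsf{VGrp}$ means: the structure on the middle object makes it a $V$-group, all three maps are $V$-homomorphisms, $\pi_2\circ\langle 0,1\rangle=1_Y$, and $\langle 1,0\rangle$ is a kernel of $\pi_2$ in $\mathsf{VGrp}$. *)

theory Defs
  imports Main
begin

definition comm_unital_quantale :: "('v::complete_lattice \<Rightarrow> 'v \<Rightarrow> 'v) \<Rightarrow> 'v \<Rightarrow> bool" where
  "comm_unital_quantale tensor k \<longleftrightarrow>
     (\<forall>u v w. tensor (tensor u v) w = tensor u (tensor v w)) \<and>
     (\<forall>u v. tensor u v = tensor v u) \<and>
     (\<forall>u. tensor u k = u \<and> tensor k u = u) \<and>
     (\<forall>u A. tensor u (Sup A) = Sup (tensor u ` A)) \<and>
     (\<forall>u A. tensor (Sup A) u = Sup ((\<lambda>v. tensor v u) ` A))"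

definition is_frame :: "'v::complete_lattice itself \<Rightarrow> bool" where
  "is_frame _ \<longleftrightarrow> (\<forall>(u::'v) A. inf u (Sup A) = Sup ((\<lambda>v. inf u v) ` A))"

definition vcat :: "('v::complete_lattice \<Rightarrow> 'v \<Rightarrow> 'v) \<Rightarrow> 'v \<Rightarrow> ('x \<Rightarrow> 'x \<Rightarrow> 'v) \<Rightarrow> bool" where
  "vcat tensor k a \<longleftrightarrow>
     (\<forall>x. k \<le> a x x) \<and> (\<forall>x x' x''. tensor (a x x') (a x' x'') \<le> a x x'')"

definition vfunctor :: "('x \<Rightarrow> 'x \<Rightarrow> 'v::complete_lattice) \<Rightarrow> ('y \<Rightarrow> 'y \<Rightarrow> 'v) \<Rightarrow> ('x \<Rightarrow> 'y) \<Rightarrow> bool" where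
  "vfunctor a b f \<longleftrightarrow> (\<forall>x x'. a x x' \<le> b (f x) (f x'))"

definition is_group :: "('x \<Rightarrow> 'x \<Rightarrow> 'x) \<Rightarrow> bool" where
  "is_group opr \<longleftrightarrow> (\<exists>z inv. group opr z inv)"

definition vgroup :: "('v::complete_lattice \<Rightarrow> 'v \<Rightarrow> 'v) \<Rightarrow> 'v \<Rightarrow> ('x \<Rightarrow> 'x \<Rightarrow> 'v) \<Rightarrow> ('x \<Rightarrow> 'x \<Rightarrow> 'x) \<Rightarrow> bool" where
  "vgroup tensor k a opr \<longleftrightarrow>
     vcat tensor k a \<and> is_group opr \<and>
     (\<forall>x1 x2 x1' x2'. tensor (a x1 x2) (a x1' x2') \<le> a (opr x1 x1') (opr x2 x2'))"

definition group_hom :: "('x \<Rightarrow> 'x \<Rightarrow> 'x) \<Rightarrow> ('y \<Rightarrow> 'y \<Rightarrow> 'y) \<Rightarrow> ('x \<Rightarrow> 'y) \<Rightarrow> bool" where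
  "group_hom plusX plusY f \<longleftrightarrow> (\<forall>x x'. f (plusX x x') = plusY (f x) (f x'))"

definition vhom :: "('x \<Rightarrow> 'x \<Rightarrow> 'v::complete_lattice) \<Rightarrow> ('x \<Rightarrow> 'x \<Rightarrow> 'x)
                    \<Rightarrow> ('y \<Rightarrow> 'y \<Rightarrow> 'v) \<Rightarrow> ('y \<Rightarrow> 'y \<Rightarrow> 'y) \<Rightarrow> ('x \<Rightarrow> 'y) \<Rightarrow> bool" where
  "vhom a plusX b plusY f \<longleftrightarrow> group_hom plusX plusY f \<and> vfunctor a b f"

text \<open>e : (K,c) \<rightarrow> (M,m) is a kernel of p : (M,m) \<rightarrow> (Y,b) in VGrp
  (zero morphisms are the constant maps to the neutral element, VGrp being pointed),
  tested against all V-groups whose carrier is the type 'z.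
  In the main theorem 'z is a free (hence universally quantified) type variable.\<close>
definition is_vgrp_kernel ::
  "'z itself \<Rightarrow> ('v::complete_lattice \<Rightarrow> 'v \<Rightarrow> 'v) \<Rightarrow> 'v
   \<Rightarrow> ('k \<Rightarrow> 'k \<Rightarrow> 'v) \<Rightarrow> ('k \<Rightarrow> 'k \<Rightarrow> 'k)
   \<Rightarrow> ('m \<Rightarrow> 'm \<Rightarrow> 'v) \<Rightarrow> ('m \<Rightarrow> 'm \<Rightarrow> 'm)
   \<Rightarrow> 'y \<Rightarrow> ('k \<Rightarrow> 'm) \<Rightarrow> ('m \<Rightarrow> 'y) \<Rightarrow> bool" where
  "is_vgrp_kernel _ tensor k c plusK m plusM zeroY e p \<longleftrightarrow>
     (\<forall>x. p (e x) = zeroY) \<and>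
     (\<forall>(plusZ :: 'z \<Rightarrow> 'z \<Rightarrow> 'z) d g.
        vgroup tensor k d plusZ \<and> vhom d plusZ m plusM g \<and> (\<forall>z. p (g z) = zeroY) \<longrightarrow>
        (\<exists>!h. vhom d plusZ c plusK h \<and> (\<forall>z. e (h z) = g z)))"

definition group_action :: "('y::group_add \<Rightarrow> 'x::group_add \<Rightarrow> 'x) \<Rightarrow> bool" where
  "group_action \<phi> \<longleftrightarrow>
     (\<forall>y. bij (\<phi> y) \<and> (\<forall>x x'. \<phi> y (x + x') = \<phi> y x + \<phi> y x')) \<and>
     (\<forall>y y'. \<phi> (y + y') = \<phi> y \<circ> \<phi> y')"

definition sdp_plus :: "('y::group_add \<Rightarrow> 'x::group_add \<Rightarrow> 'x) \<Rightarrow> 'x \<times> 'y \<Rightarrow> 'x \<times> 'y \<Rightarrow> 'x \<times> 'y" where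
  "sdp_plus \<phi> p q = (fst p + \<phi> (snd p) (fst q), snd p + snd q)"

definition tensor_struct :: "('v \<Rightarrow> 'v \<Rightarrow> 'v) \<Rightarrow> ('x \<Rightarrow> 'x \<Rightarrow> 'v) \<Rightarrow> ('y \<Rightarrow> 'y \<Rightarrow> 'v)
                             \<Rightarrow> 'x \<times> 'y \<Rightarrow> 'x \<times> 'y \<Rightarrow> 'v" where
  "tensor_struct tensor a b p q = tensor (a (fst p) (fst q)) (b (snd p) (snd q))"

definition incl1 :: "'x \<Rightarrow> 'x \<times> 'y::zero" where "incl1 x = (x, 0)"
definition incl2 :: "'y \<Rightarrow> 'x::zero \<times> 'y" where "incl2 y = (0, y)"

definition phibar :: "('y \<Rightarrow> 'x \<Rightarrow> 'x) \<Rightarrow> 'x \<times> 'y \<Rightarrow> 'x \<times> 'y" where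
  "phibar \<phi> p = (\<phi> (snd p) (fst p), snd p)"

definition split_ext_sdp :: "'z itself \<Rightarrow> ('v::complete_lattice \<Rightarrow> 'v \<Rightarrow> 'v) \<Rightarrow> 'v
   \<Rightarrow> ('x::group_add \<Rightarrow> 'x \<Rightarrow> 'v) \<Rightarrow> ('y::group_add \<Rightarrow> 'y \<Rightarrow> 'v) \<Rightarrow> ('y \<Rightarrow> 'x \<Rightarrow> 'x) \<Rightarrow> bool" where
  "split_ext_sdp tz tensor k a b \<phi> \<longleftrightarrow>
     (let m = tensor_struct tensor a b; plusM = sdp_plus \<phi> in
       vgroup tensor k m plusM \<and>
       vhom a (+) m plusM incl1 \<and>
       vhom m plusM b (+) snd \<and>
       vhom b (+) m plusM incl2 \<and>
       (\<forall>y. snd (incl2 y :: 'x \<times> 'y) = y) \<and>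
       is_vgrp_kernel tz tensor k a (+) m plusM 0 incl1 snd)"

end

theory Submission
  imports Defs
begin

text \<open>Because \<open>k = \<top>\<close>, each \<open>a x x\<close> is \<open>\<top>\<close>, so \<open>a \<otimes> b\<close> restricts to \<open>a\<close> on
  \<open>X \<times> 0\<close> and to \<open>b\<close> on \<open>0 \<times> Y\<close>, and \<open>u \<otimes> v \<le> v\<close> makes \<open>\<pi>\<^sub>2\<close> a \<open>V\<close>-functor. In the
  semidirect product \<open>(\<phi>\<^sub>y x, y) = (0, y) + (x, 0)\<close>, so compatibility of \<open>a \<otimes> b\<close> with the
  group operation, tested on these two factors, is exactly functoriality of \<open>\<phi>\<close>-bar.
  Conversely, functoriality of \<open>\<phi>\<close>-bar lets one replace \<open>a(x\<^sub>1', x\<^sub>2') \<otimes> b(y\<^sub>1, y\<^sub>2)\<close> by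
  \<open>a(\<phi>\<^sub>y\<^sub>1 x\<^sub>1', \<phi>\<^sub>y\<^sub>2 x\<^sub>2') \<otimes> b(y\<^sub>1, y\<^sub>2)\<close>, after which compatibility of \<open>a\<close> and \<open>b\<close> with
  their group operations gives compatibility of \<open>a \<otimes> b\<close>. All other conditions of a split
  extension hold as soon as \<open>X \<rtimes> Y\<close> is a \<open>V\<close>-group.\<close>

lemma quantale_comm_monoid: "comm_unital_quantale T k \<Longrightarrow> comm_monoid T k"
  unfolding comm_unital_quantale_def by unfold_locales blast+

lemma quantale_unit_right: "comm_unital_quantale T k \<Longrightarrow> T u k = u"
  unfolding comm_unital_quantale_def by blast

lemma quantale_unit_left: "comm_unital_quantale T k \<Longrightarrow> T k u = u"
  unfolding comm_unital_quantale_def by blast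

lemma quantale_mono_right:
  assumes "comm_unital_quantale T k" and "v \<le> w"
  shows "T u v \<le> T u w"
proof -
  have "T u (Sup {v, w}) = Sup (T u ` {v, w})"
    using assms(1) unfolding comm_unital_quantale_def by blast
  then have "T u w = sup (T u v) (T u w)"
    using assms(2) by (simp add: sup_absorb2)
  then show ?thesis
    by (metis sup.cobounded1)
qed

lemma quantale_mono:
  assumes "comm_unital_quantale T k" and "u \<le> u'" and "v \<le> v'"
  shows "T u v \<le> T u' v'"
proof -
  interpret T: comm_monoid T k
    by (rule quantale_comm_monoid[OF assms(1)])
  have "T u v \<le> T u v'"
    by (rule quantale_mono_right[OF assms(1,3)])
  also have "\<dots> \<le> T u' v'"
    by (metis T.commute quantale_mono_right[OF assms(1,2)])
  finally show ?thesis .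
qed

lemma integral_quantale_le_right:
  assumes "comm_unital_quantale T top"
  shows "T u v \<le> v"
  using quantale_mono[OF assms top_greatest order_refl, of u v] quantale_unit_left[OF assms] by simp

lemma vcat_refl_le: "vcat T k a \<Longrightarrow> k \<le> a x x"
  unfolding vcat_def by blast

lemma vcat_trans_le: "vcat T k a \<Longrightarrow> T (a x x') (a x' x'') \<le> a x x''"
  unfolding vcat_def by blast

lemma vcat_diagonal_top: "vcat T top a \<Longrightarrow> a x x = top"
  unfolding vcat_def by (simp add: top_unique)

lemma vcat_if_vgroup: "vgroup T k a opr \<Longrightarrow> vcat T k a"
  unfolding vgroup_def by blast

lemma vgroup_add_le:
  "vgroup T k a opr \<Longrightarrow> T (a x\<^sub>1 x\<^sub>2) (a x\<^sub>1' x\<^sub>2') \<le> a (opr x\<^sub>1 x\<^sub>1') (opr x\<^sub>2 x\<^sub>2')"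
  unfolding vgroup_def by blast

lemma group_action_add: "group_action \<phi> \<Longrightarrow> \<phi> y (x + x') = \<phi> y x + \<phi> y x'"
  unfolding group_action_def by blast

lemma group_action_compose: "group_action \<phi> \<Longrightarrow> \<phi> (y + y') x = \<phi> y (\<phi> y' x)"
  unfolding group_action_def by simp

lemma group_action_at_zero:
  assumes "group_action \<phi>"
  shows "\<phi> y 0 = 0"
proof -
  have "\<phi> y 0 + \<phi> y 0 = \<phi> y 0 + 0"
    using group_action_add[OF assms, of y 0 0] by simp
  then show ?thesis
    by (simp only: add_left_cancel)
qed

lemma group_action_by_zero:
  assumes "group_action \<phi>"
  shows "\<phi> 0 x = x"
proof -
  have "inj (\<phi> 0)"
    using assms unfolding group_action_def by (blast intro: bij_is_inj)
  moreover have "\<phi> 0 (\<phi> 0 x) = \<phi> 0 x"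
    using group_action_compose[OF assms, of 0 0 x] by simp
  ultimately show ?thesis
    by (blast dest: injD)
qed

lemma is_group_sdp_plus:
  assumes "group_action \<phi>"
  shows "is_group (sdp_plus \<phi>)"
  unfolding is_group_def
proof (intro exI)
  show "group (sdp_plus \<phi>) (0, 0) (\<lambda>p. (\<phi> (- snd p) (- fst p), - snd p))"
  proof
    fix p q r
    show "sdp_plus \<phi> (sdp_plus \<phi> p q) r = sdp_plus \<phi> p (sdp_plus \<phi> q r)"
      by (simp add: sdp_plus_def group_action_add[OF assms] group_action_compose[OF assms] add.assoc)
    show "sdp_plus \<phi> (0, 0) p = p"
      by (simp add: sdp_plus_def group_action_by_zero[OF assms])
    show "sdp_plus \<phi> (\<phi> (- snd p) (- fst p), - snd p) p = (0, 0)"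
      by (simp add: sdp_plus_def group_action_add[OF assms, symmetric] group_action_at_zero[OF assms])
  qed
qed

lemma sdp_plus_incl2_incl1: "sdp_plus \<phi> (incl2 y) (incl1 x) = phibar \<phi> (x, y)"
  by (simp add: sdp_plus_def incl1_def incl2_def phibar_def)

lemma tensor_struct_incl1:
  assumes "comm_unital_quantale T top" and "vcat T top b"
  shows "tensor_struct T a b (incl1 x) (incl1 x') = a x x'"
  by (simp add: tensor_struct_def incl1_def quantale_unit_right[OF assms(1)] vcat_diagonal_top[OF assms(2)])

lemma tensor_struct_incl2:
  assumes "comm_unital_quantale T top" and "vcat T top a"
  shows "tensor_struct T a b (incl2 y) (incl2 y') = b y y'"
  by (simp add: tensor_struct_def incl2_def quantale_unit_left[OF assms(1)] vcat_diagonal_top[OF assms(2)])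

lemma vcat_tensor_struct:
  assumes "comm_unital_quantale T k" and "vcat T k a" and "vcat T k b"
  shows "vcat T k (tensor_struct T a b)"
  unfolding vcat_def
proof (intro conjI allI)
  interpret T: comm_monoid T k
    by (rule quantale_comm_monoid[OF assms(1)])
  fix p p' p''
  have "k = T k k"
    by simp
  also have "\<dots> \<le> tensor_struct T a b p p"
    unfolding tensor_struct_def
    by (intro quantale_mono[OF assms(1)] vcat_refl_le[OF assms(2)] vcat_refl_le[OF assms(3)])
  finally show "k \<le> tensor_struct T a b p p" .
  have "T (tensor_struct T a b p p') (tensor_struct T a b p' p'')
      = T (T (a (fst p) (fst p')) (a (fst p') (fst p''))) (T (b (snd p) (snd p')) (b (snd p') (snd p'')))"
    unfolding tensor_struct_def by (simp only: ac_simps)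
  also have "\<dots> \<le> tensor_struct T a b p p''"
    unfolding tensor_struct_def
    by (intro quantale_mono[OF assms(1)] vcat_trans_le[OF assms(2)] vcat_trans_le[OF assms(3)])
  finally show "T (tensor_struct T a b p p') (tensor_struct T a b p' p'') \<le> tensor_struct T a b p p''" .
qed

lemma vfunctor_phibar_if_vgroup_sdp:
  assumes "comm_unital_quantale T top" and "vcat T top a" and "vcat T top b"
    and "vgroup T top (tensor_struct T a b) (sdp_plus \<phi>)"
  shows "vfunctor (tensor_struct T a b) (tensor_struct T a b) (phibar \<phi>)"
proof -
  interpret T: comm_monoid T top
    by (rule quantale_comm_monoid[OF assms(1)])
  let ?m = "tensor_struct T a b"
  have "?m (x, y) (x', y') \<le> ?m (phibar \<phi> (x, y)) (phibar \<phi> (x', y'))" for x y x' y'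
  proof -
    have "?m (x, y) (x', y') = T (b y y') (a x x')"
      by (simp add: tensor_struct_def T.commute)
    also have "\<dots> = T (?m (incl2 y) (incl2 y')) (?m (incl1 x) (incl1 x'))"
      by (simp only: tensor_struct_incl1[OF assms(1,3)] tensor_struct_incl2[OF assms(1,2)])
    also have "\<dots> \<le> ?m (sdp_plus \<phi> (incl2 y) (incl1 x)) (sdp_plus \<phi> (incl2 y') (incl1 x'))"
      by (rule vgroup_add_le[OF assms(4)])
    finally show ?thesis
      by (simp only: sdp_plus_incl2_incl1)
  qed
  then show ?thesis
    unfolding vfunctor_def by (simp add: split_paired_all)
qed

lemma tensor_struct_sdp_plus_le:
  assumes "comm_unital_quantale T k" and "vgroup T k a (+)" and "vgroup T k b (+)"
    and "vfunctor (tensor_struct T a b) (tensor_struct T a b) (phibar \<phi>)"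
  shows "T (tensor_struct T a b p\<^sub>1 p\<^sub>2) (tensor_struct T a b p\<^sub>1' p\<^sub>2')
           \<le> tensor_struct T a b (sdp_plus \<phi> p\<^sub>1 p\<^sub>1') (sdp_plus \<phi> p\<^sub>2 p\<^sub>2')"
proof -
  interpret T: comm_monoid T k
    by (rule quantale_comm_monoid[OF assms(1)])
  have twist: "T (a x x') (b y y') \<le> T (a (\<phi> y x) (\<phi> y' x')) (b y y')" for x x' y y'
    using assms(4) unfolding vfunctor_def tensor_struct_def phibar_def by (metis fst_conv snd_conv)
  obtain x\<^sub>1 y\<^sub>1 x\<^sub>2 y\<^sub>2 x\<^sub>1' y\<^sub>1' x\<^sub>2' y\<^sub>2' where
    p: "p\<^sub>1 = (x\<^sub>1, y\<^sub>1)" "p\<^sub>2 = (x\<^sub>2, y\<^sub>2)" "p\<^sub>1' = (x\<^sub>1', y\<^sub>1')" "p\<^sub>2' = (x\<^sub>2', y\<^sub>2')"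
    by (metis prod.exhaust)
  have "T (tensor_struct T a b p\<^sub>1 p\<^sub>2) (tensor_struct T a b p\<^sub>1' p\<^sub>2')
      = T (a x\<^sub>1 x\<^sub>2) (T (T (a x\<^sub>1' x\<^sub>2') (b y\<^sub>1 y\<^sub>2)) (b y\<^sub>1' y\<^sub>2'))"
    unfolding tensor_struct_def p by (simp add: ac_simps)
  also have "\<dots> \<le> T (a x\<^sub>1 x\<^sub>2) (T (T (a (\<phi> y\<^sub>1 x\<^sub>1') (\<phi> y\<^sub>2 x\<^sub>2')) (b y\<^sub>1 y\<^sub>2)) (b y\<^sub>1' y\<^sub>2'))"
    by (intro quantale_mono[OF assms(1)] twist order_refl)
  also have "\<dots> = T (T (a x\<^sub>1 x\<^sub>2) (a (\<phi> y\<^sub>1 x\<^sub>1') (\<phi> y\<^sub>2 x\<^sub>2'))) (T (b y\<^sub>1 y\<^sub>2) (b y\<^sub>1' y\<^sub>2'))"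
    by (simp add: ac_simps)
  also have "\<dots> \<le> T (a (x\<^sub>1 + \<phi> y\<^sub>1 x\<^sub>1') (x\<^sub>2 + \<phi> y\<^sub>2 x\<^sub>2')) (b (y\<^sub>1 + y\<^sub>1') (y\<^sub>2 + y\<^sub>2'))"
    by (intro quantale_mono[OF assms(1)] vgroup_add_le[OF assms(2)] vgroup_add_le[OF assms(3)])
  also have "\<dots> = tensor_struct T a b (sdp_plus \<phi> p\<^sub>1 p\<^sub>1') (sdp_plus \<phi> p\<^sub>2 p\<^sub>2')"
    unfolding tensor_struct_def sdp_plus_def p by simp
  finally show ?thesis .
qed

lemma vgroup_sdp_if_vfunctor_phibar:
  assumes "comm_unital_quantale T k" and "vgroup T k a (+)" and "vgroup T k b (+)"
    and "group_action \<phi>"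
    and "vfunctor (tensor_struct T a b) (tensor_struct T a b) (phibar \<phi>)"
  shows "vgroup T k (tensor_struct T a b) (sdp_plus \<phi>)"
  unfolding vgroup_def
  using vcat_tensor_struct[OF assms(1) vcat_if_vgroup[OF assms(2)] vcat_if_vgroup[OF assms(3)]]
    is_group_sdp_plus[OF assms(4)] tensor_struct_sdp_plus_le[OF assms(1-3,5)]
  by blast

lemma vgroup_sdp_iff_vfunctor_phibar:
  assumes "comm_unital_quantale T top" and "vgroup T top a (+)" and "vgroup T top b (+)"
    and "group_action \<phi>"
  shows "vgroup T top (tensor_struct T a b) (sdp_plus \<phi>)
           \<longleftrightarrow> vfunctor (tensor_struct T a b) (tensor_struct T a b) (phibar \<phi>)"
  using vfunctor_phibar_if_vgroup_sdp[OF assms(1) vcat_if_vgroup[OF assms(2)] vcat_if_vgroup[OF assms(3)]]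
    vgroup_sdp_if_vfunctor_phibar[OF assms]
  by blast

lemma vhom_incl1:
  assumes "comm_unital_quantale T top" and "vcat T top b" and "group_action \<phi>"
  shows "vhom a (+) (tensor_struct T a b) (sdp_plus \<phi>) incl1"
  unfolding vhom_def group_hom_def vfunctor_def tensor_struct_incl1[OF assms(1,2)]
  by (simp add: sdp_plus_def incl1_def group_action_by_zero[OF assms(3)])

lemma vhom_incl2:
  assumes "comm_unital_quantale T top" and "vcat T top a" and "group_action \<phi>"
  shows "vhom b (+) (tensor_struct T a b) (sdp_plus \<phi>) incl2"
  unfolding vhom_def group_hom_def vfunctor_def tensor_struct_incl2[OF assms(1,2)]
  by (simp add: sdp_plus_def incl2_def group_action_at_zero[OF assms(3)])

lemma vhom_snd:
  assumes "comm_unital_quantale T top"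
  shows "vhom (tensor_struct T a b) (sdp_plus \<phi>) b (+) snd"
  unfolding vhom_def group_hom_def vfunctor_def
  by (simp add: tensor_struct_def sdp_plus_def integral_quantale_le_right[OF assms])

lemma vhom_fst_comp_if_snd_zero:
  assumes "comm_unital_quantale T top" and "vcat T top b" and "group_action \<phi>"
    and "vhom d plusZ (tensor_struct T a b) (sdp_plus \<phi>) g" and "\<forall>z. snd (g z) = 0"
  shows "vhom d plusZ a (+) (fst \<circ> g)"
  unfolding vhom_def group_hom_def vfunctor_def
proof (intro conjI allI)
  have g: "g z = incl1 (fst (g z))" for z
    using assms(5) by (metis incl1_def prod.collapse)
  fix z z'
  show "(fst \<circ> g) (plusZ z z') = (fst \<circ> g) z + (fst \<circ> g) z'"
    using assms(4,5) unfolding vhom_def group_hom_def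
    by (simp add: sdp_plus_def group_action_by_zero[OF assms(3)])
  have "d z z' \<le> tensor_struct T a b (g z) (g z')"
    using assms(4) unfolding vhom_def vfunctor_def by blast
  also have "\<dots> = a (fst (g z)) (fst (g z'))"
    by (subst (1 2) g) (rule tensor_struct_incl1[OF assms(1,2)])
  finally show "d z z' \<le> a ((fst \<circ> g) z) ((fst \<circ> g) z')"
    by simp
qed

lemma is_vgrp_kernel_incl1_snd:
  fixes a :: "'x::group_add \<Rightarrow> 'x \<Rightarrow> 'v::complete_lattice" and b :: "'y::group_add \<Rightarrow> 'y \<Rightarrow> 'v"
  assumes "comm_unital_quantale T top" and "vcat T top b" and "group_action \<phi>"
  shows "is_vgrp_kernel TYPE('z) T top a (+) (tensor_struct T a b) (sdp_plus \<phi>) 0 incl1 snd"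
  unfolding is_vgrp_kernel_def
proof (intro conjI allI impI)
  show "snd (incl1 x :: 'x \<times> 'y) = 0" for x
    by (simp add: incl1_def)
  fix plusZ :: "'z \<Rightarrow> 'z \<Rightarrow> 'z" and d g
  assume g: "vgroup T top d plusZ \<and> vhom d plusZ (tensor_struct T a b) (sdp_plus \<phi>) g
    \<and> (\<forall>z. snd (g z) = 0)"
  show "\<exists>!h. vhom d plusZ a (+) h \<and> (\<forall>z. incl1 (h z) = g z)"
  proof (rule ex1I[of _ "fst \<circ> g"])
    show "vhom d plusZ a (+) (fst \<circ> g) \<and> (\<forall>z. incl1 ((fst \<circ> g) z) = g z)"
    proof
      show "vhom d plusZ a (+) (fst \<circ> g)"
        using g by (intro vhom_fst_comp_if_snd_zero[OF assms]) auto
      show "\<forall>z. incl1 ((fst \<circ> g) z) = g z"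
        using g by (simp add: incl1_def prod_eq_iff)
    qed
    show "h = fst \<circ> g" if "vhom d plusZ a (+) h \<and> (\<forall>z. incl1 (h z) = g z)" for h
      using that unfolding incl1_def fun_eq_iff by (metis comp_apply fst_conv)
  qed
qed

lemma split_ext_sdp_iff_vgroup:
  fixes a :: "'x::group_add \<Rightarrow> 'x \<Rightarrow> 'v::complete_lattice" and b :: "'y::group_add \<Rightarrow> 'y \<Rightarrow> 'v"
  assumes "comm_unital_quantale T top" and "vcat T top a" and "vcat T top b"
    and "group_action \<phi>"
  shows "split_ext_sdp TYPE('z) T top a b \<phi> \<longleftrightarrow> vgroup T top (tensor_struct T a b) (sdp_plus \<phi>)"
proof -
  have "is_vgrp_kernel TYPE('z) T top a (+) (tensor_struct T a b) (sdp_plus \<phi>) 0 incl1 snd"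
    by (rule is_vgrp_kernel_incl1_snd[OF assms(1,3,4)])
  then show ?thesis
    unfolding split_ext_sdp_def Let_def
    using vhom_incl1[OF assms(1,3,4)] vhom_snd[OF assms(1), where a = a and b = b and \<phi> = \<phi>] vhom_incl2[OF assms(1,2,4)]
    by (simp add: incl2_def)
qed

theorem theorem7p2:
  fixes tensor :: "'v::complete_lattice \<Rightarrow> 'v \<Rightarrow> 'v" and k :: 'v
    and a :: "'x::group_add \<Rightarrow> 'x \<Rightarrow> 'v" and b :: "'y::group_add \<Rightarrow> 'y \<Rightarrow> 'v"
    and \<phi> :: "'y \<Rightarrow> 'x \<Rightarrow> 'x"
  assumes "comm_unital_quantale tensor k"
    and "is_frame TYPE('v)"
    and "k = top"
    and "vgroup tensor k a (+)"
    and "vgroup tensor k b (+)"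
    and "group_action \<phi>"
  shows "split_ext_sdp TYPE('z) tensor k a b \<phi> \<longleftrightarrow>
         vfunctor (tensor_struct tensor a b) (tensor_struct tensor a b) (phibar \<phi>)"
proof -
  note integral = assms(1,4,5)[unfolded assms(3)]
  have "split_ext_sdp TYPE('z) tensor top a b \<phi> \<longleftrightarrow> vgroup tensor top (tensor_struct tensor a b) (sdp_plus \<phi>)"
    using split_ext_sdp_iff_vgroup[OF integral(1) vcat_if_vgroup[OF integral(2)]
        vcat_if_vgroup[OF integral(3)] assms(6)] .
  also have "\<dots> \<longleftrightarrow> vfunctor (tensor_struct tensor a b) (tensor_struct tensor a b) (phibar \<phi>)"
    by (rule vgroup_sdp_iff_vfunctor_phibar[OF integral assms(6)])
  finally show ?thesis
    unfolding assms(3) .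
qed

end
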